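(* Let $L$ be the graph obtained from the line graph $L(K_{5,6})$ of the complete bipartite graph $K_{5,6}$ by adding, for every edge $uv$ of $L(K_{5,6})$, a new vertex adjacent exactly to $u$ and $v$. Let $L\overline{L}$ be the disjoint union of $L$ and its complement $\overline L$. Then $L\overline{L}$ is not $\cup$-equistable, i.e., neither $L\overline{L}$ nor its complement is equistable.
   Context: A graph $G=(V,E)$ is equistable if there is $\varphi:V\to\mathbb R_+$ such that for all $S\subseteq V$, $S$ is a maximal stable set of $G$ iff $\sum_{v\in S}\varphi(v)=1$. A graph is $\cup$-equistable if it or its complement is equistable. *)

theory Defs
  imports Main "HOL.Real"
begin

text \<open>A (simple) graph is given by a vertex set V and a symmetric irreflexive
adjacency relation E (only its restriction to V matters).\<close>

definition stable_set :: "'a set \<Rightarrow> ('a \<Rightarrow> 'a \<Rightarrow> bool) \<Rightarrow> 'a set \<Rightarrow> bool" where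
  "stable_set V E S \<longleftrightarrow> S \<subseteq> V \<and> (\<forall>u\<in>S. \<forall>v\<in>S. \<not> E u v)"

definition maximal_stable_set :: "'a set \<Rightarrow> ('a \<Rightarrow> 'a \<Rightarrow> bool) \<Rightarrow> 'a set \<Rightarrow> bool" where
  "maximal_stable_set V E S \<longleftrightarrow>
     stable_set V E S \<and> (\<forall>T. stable_set V E T \<and> S \<subseteq> T \<longrightarrow> T = S)"

definition equistable :: "'a set \<Rightarrow> ('a \<Rightarrow> 'a \<Rightarrow> bool) \<Rightarrow> bool" where
  "equistable V E \<longleftrightarrow>
     (\<exists>\<phi> :: 'a \<Rightarrow> real. (\<forall>v\<in>V. \<phi> v \<ge> 0) \<and>
        (\<forall>S. S \<subseteq> V \<longrightarrow> (maximal_stable_set V E S \<longleftrightarrow> (\<Sum>v\<in>S. \<phi> v) = 1)))"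

definition graph_compl :: "('a \<Rightarrow> 'a \<Rightarrow> bool) \<Rightarrow> 'a \<Rightarrow> 'a \<Rightarrow> bool" where
  "graph_compl E = (\<lambda>x y. x \<noteq> y \<and> \<not> E x y)"

definition union_equistable :: "'a set \<Rightarrow> ('a \<Rightarrow> 'a \<Rightarrow> bool) \<Rightarrow> bool" where
  "union_equistable V E \<longleftrightarrow> equistable V E \<or> equistable V (graph_compl E)"

definition du_vertices :: "'a set \<Rightarrow> 'b set \<Rightarrow> ('a + 'b) set" where
  "du_vertices V1 V2 = V1 <+> V2"

fun du_edges :: "('a \<Rightarrow> 'a \<Rightarrow> bool) \<Rightarrow> ('b \<Rightarrow> 'b \<Rightarrow> bool) \<Rightarrow> 'a + 'b \<Rightarrow> 'a + 'b \<Rightarrow> bool" where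
  "du_edges E1 E2 (Inl x) (Inl y) = E1 x y"
| "du_edges E1 E2 (Inr x) (Inr y) = E2 x y"
| "du_edges E1 E2 _ _ = False"

text \<open>Line graph of K_{5,6}: vertices are the edges (i,j), i<5, j<6; two are adjacent
iff they are distinct and share an endpoint.\<close>
definition K56_edges :: "(nat \<times> nat) set" where
  "K56_edges = {0..<5} \<times> {0..<6}"

definition lineK56_adj :: "nat \<times> nat \<Rightarrow> nat \<times> nat \<Rightarrow> bool" where
  "lineK56_adj u v \<longleftrightarrow> u \<in> K56_edges \<and> v \<in> K56_edges \<and> u \<noteq> v \<and>
                         (fst u = fst v \<or> snd u = snd v)"

text \<open>The graph L: L(K_{5,6}) plus, for every edge uv of L(K_{5,6}), a new vertex
\<open>New {u,v}\<close> adjacent exactly to u and v.\<close>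
datatype Lvert = Orig "nat \<times> nat" | New "(nat \<times> nat) set"

definition L_vertices :: "Lvert set" where
  "L_vertices = Orig ` K56_edges \<union> {New {u, v} | u v. lineK56_adj u v}"

fun L_adj :: "Lvert \<Rightarrow> Lvert \<Rightarrow> bool" where
  "L_adj (Orig u) (Orig v) = lineK56_adj u v"
| "L_adj (New e) (Orig w) = (w \<in> e)"
| "L_adj (Orig w) (New e) = (w \<in> e)"
| "L_adj (New e) (New f) = False"

definition LLbar_vertices :: "(Lvert + Lvert) set" where
  "LLbar_vertices = du_vertices L_vertices L_vertices"

definition LLbar_adj :: "Lvert + Lvert \<Rightarrow> Lvert + Lvert \<Rightarrow> bool" where
  "LLbar_adj = du_edges L_adj (graph_compl L_adj)"

end

theory Submission
  imports Defs
begin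

text \<open>In the complement of \<open>L\<close>, every row and every column of the \<open>5 \<times> 6\<close> grid of edges of
  \<open>K_{5,6}\<close> is a maximal stable set: it is a maximal clique of the line graph of size at
  least three, and an added vertex sees only two original vertices. The rows partition the
  grid into 5 parts and the columns into 6, so a weighting giving all of them the same weight
  \<open>a\<close> has \<open>5a = 6a\<close>, i.e. \<open>a = 0\<close>.
  The complement of the disjoint union of \<open>L\<close> and its complement is the join of the
  complement of \<open>L\<close> with \<open>L\<close>; there every row is itself a maximal stable set, so \<open>a = 1\<close>.
  In the disjoint union itself, fix a maximal stable set \<open>S\<close> of \<open>L\<close>; then \<open>S \<union> R\<close> is maximal
  for every row or column \<open>R\<close>, so \<open>a = 1 - \<phi>(S)\<close>. Hence \<open>\<phi>(S) = 1\<close>, although \<open>S\<close> is not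
  maximal.\<close>

lemma ex_maximal_stable_set:
  assumes "finite V"
  shows "\<exists>S. maximal_stable_set V E S"
proof -
  have "finite {S. stable_set V E S}"
    by (rule finite_subset[of _ "Pow V"]) (auto simp: stable_set_def assms)
  moreover have "{} \<in> {S. stable_set V E S}" by (simp add: stable_set_def)
  ultimately obtain S where "S \<in> {S. stable_set V E S}"
    and "\<forall>T\<in>{S. stable_set V E S}. S \<subseteq> T \<longrightarrow> S = T"
    using finite_has_maximal by blast
  then show ?thesis unfolding maximal_stable_set_def by blast
qed

lemma maximal_stable_set_subset: "maximal_stable_set V E S \<Longrightarrow> S \<subseteq> V"
  by (simp add: maximal_stable_set_def stable_set_def)

lemma Inl_vimage_Un_Inr_vimage: "Inl ` (Inl -` T) \<union> Inr ` (Inr -` T) = T"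
proof
  show "T \<subseteq> Inl ` (Inl -` T) \<union> Inr ` (Inr -` T)"
  proof
    fix t assume "t \<in> T" then show "t \<in> Inl ` (Inl -` T) \<union> Inr ` (Inr -` T)" by (cases t) auto
  qed
qed auto

lemma stable_set_du_iff:
  "stable_set (V1 <+> V2) (du_edges E1 E2) T \<longleftrightarrow>
     stable_set V1 E1 (Inl -` T) \<and> stable_set V2 E2 (Inr -` T)"
  unfolding stable_set_def
proof (intro iffI conjI)
  assume "T \<subseteq> V1 <+> V2 \<and> (\<forall>u\<in>T. \<forall>v\<in>T. \<not> du_edges E1 E2 u v)"
  then show "Inl -` T \<subseteq> V1" "\<forall>u\<in>Inl -` T. \<forall>v\<in>Inl -` T. \<not> E1 u v"
    "Inr -` T \<subseteq> V2" "\<forall>u\<in>Inr -` T. \<forall>v\<in>Inr -` T. \<not> E2 u v"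
    by fastforce+
next
  assume H: "(Inl -` T \<subseteq> V1 \<and> (\<forall>u\<in>Inl -` T. \<forall>v\<in>Inl -` T. \<not> E1 u v)) \<and>
    Inr -` T \<subseteq> V2 \<and> (\<forall>u\<in>Inr -` T. \<forall>v\<in>Inr -` T. \<not> E2 u v)"
  show "T \<subseteq> V1 <+> V2"
  proof
    fix t assume "t \<in> T" then show "t \<in> V1 <+> V2" using H by (cases t) auto
  qed
  show "\<forall>u\<in>T. \<forall>v\<in>T. \<not> du_edges E1 E2 u v"
  proof (intro ballI)
    fix u v assume "u \<in> T" "v \<in> T"
    then show "\<not> du_edges E1 E2 u v" using H by (cases u; cases v) auto
  qed
qed

text \<open>In the complement every vertex of one side is adjacent to every vertex of the other.\<close>

lemma stable_set_compl_du_iff: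
  "stable_set (V1 <+> V2) (graph_compl (du_edges E1 E2)) T \<longleftrightarrow>
     stable_set V1 (graph_compl E1) (Inl -` T) \<and> stable_set V2 (graph_compl E2) (Inr -` T) \<and>
     (Inl -` T = {} \<or> Inr -` T = {})"
  unfolding stable_set_def graph_compl_def
proof (intro iffI conjI)
  assume H: "T \<subseteq> V1 <+> V2 \<and> (\<forall>u\<in>T. \<forall>v\<in>T. \<not> (u \<noteq> v \<and> \<not> du_edges E1 E2 u v))"
  then show "Inl -` T \<subseteq> V1" "\<forall>u\<in>Inl -` T. \<forall>v\<in>Inl -` T. \<not> (u \<noteq> v \<and> \<not> E1 u v)"
    "Inr -` T \<subseteq> V2" "\<forall>u\<in>Inr -` T. \<forall>v\<in>Inr -` T. \<not> (u \<noteq> v \<and> \<not> E2 u v)"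
    by fastforce+
  show "Inl -` T = {} \<or> Inr -` T = {}"
  proof (rule ccontr)
    assume "\<not> (Inl -` T = {} \<or> Inr -` T = {})"
    then obtain x y where "Inl x \<in> T" "Inr y \<in> T" by auto
    then show False using H by fastforce
  qed
next
  assume H: "(Inl -` T \<subseteq> V1 \<and> (\<forall>u\<in>Inl -` T. \<forall>v\<in>Inl -` T. \<not> (u \<noteq> v \<and> \<not> E1 u v))) \<and>
    (Inr -` T \<subseteq> V2 \<and> (\<forall>u\<in>Inr -` T. \<forall>v\<in>Inr -` T. \<not> (u \<noteq> v \<and> \<not> E2 u v))) \<and>
    (Inl -` T = {} \<or> Inr -` T = {})"
  show "T \<subseteq> V1 <+> V2"
  proof
    fix t assume "t \<in> T" then show "t \<in> V1 <+> V2" using H by (cases t) auto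
  qed
  show "\<forall>u\<in>T. \<forall>v\<in>T. \<not> (u \<noteq> v \<and> \<not> du_edges E1 E2 u v)"
  proof (intro ballI)
    fix u v assume "u \<in> T" "v \<in> T"
    then show "\<not> (u \<noteq> v \<and> \<not> du_edges E1 E2 u v)" using H by (cases u; cases v) auto
  qed
qed

lemma maximal_stable_set_du:
  assumes "maximal_stable_set V1 E1 S1" "maximal_stable_set V2 E2 S2"
  shows "maximal_stable_set (V1 <+> V2) (du_edges E1 E2) (Inl ` S1 \<union> Inr ` S2)"
  unfolding maximal_stable_set_def
proof (intro conjI allI impI)
  have vimage: "Inl -` (Inl ` S1 \<union> Inr ` S2) = S1" "Inr -` (Inl ` S1 \<union> Inr ` S2) = S2"
    by auto
  show "stable_set (V1 <+> V2) (du_edges E1 E2) (Inl ` S1 \<union> Inr ` S2)"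
    using assms unfolding stable_set_du_iff maximal_stable_set_def vimage by simp
  fix T assume T: "stable_set (V1 <+> V2) (du_edges E1 E2) T \<and> Inl ` S1 \<union> Inr ` S2 \<subseteq> T"
  then have "Inl -` T = S1" "Inr -` T = S2"
    using assms unfolding stable_set_du_iff maximal_stable_set_def by blast+
  then show "T = Inl ` S1 \<union> Inr ` S2" using Inl_vimage_Un_Inr_vimage by metis
qed

lemma maximal_stable_set_compl_du_Inl:
  assumes "maximal_stable_set V1 (graph_compl E1) S" "S \<noteq> {}"
  shows "maximal_stable_set (V1 <+> V2) (graph_compl (du_edges E1 E2)) (Inl ` S)"
  unfolding maximal_stable_set_def
proof (intro conjI allI impI)
  have vimage: "Inl -` Inl ` S = S" "Inr -` Inl ` S = {}" by auto
  show "stable_set (V1 <+> V2) (graph_compl (du_edges E1 E2)) (Inl ` S)"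
    using assms unfolding stable_set_compl_du_iff maximal_stable_set_def vimage
    by (simp add: stable_set_def)
  fix T assume T: "stable_set (V1 <+> V2) (graph_compl (du_edges E1 E2)) T \<and> Inl ` S \<subseteq> T"
  then have "Inr -` T = {}" using assms(2) unfolding stable_set_compl_du_iff by blast
  moreover have "Inl -` T = S"
    using T assms(1) unfolding stable_set_compl_du_iff maximal_stable_set_def by blast
  ultimately show "T = Inl ` S" using Inl_vimage_Un_Inr_vimage by (metis image_empty sup_bot.right_neutral)
qed

lemma finite_L_vertices: "finite L_vertices"
proof -
  have "L_vertices \<subseteq> Orig ` K56_edges \<union> (\<lambda>(u, v). New {u, v}) ` (K56_edges \<times> K56_edges)"
    unfolding L_vertices_def lineK56_adj_def by auto
  moreover have "finite K56_edges" unfolding K56_edges_def by simp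
  ultimately show ?thesis by (meson finite_SigmaI finite_UnI finite_imageI finite_subset)
qed

text \<open>The lines are the stars of the vertices of \<open>K_{5,6}\<close>: rows for the 5 vertices of one side,
  columns for the 6 vertices of the other.\<close>

definition K56_line :: "(nat \<times> nat) set \<Rightarrow> bool" where
  "K56_line K \<longleftrightarrow> (\<exists>i<5. K = {i} \<times> {0..<6}) \<or> (\<exists>j<6. K = {0..<5} \<times> {j})"

lemma K56_line_weight_eq_0:
  fixes w :: "nat \<times> nat \<Rightarrow> real"
  assumes "\<And>K. K56_line K \<Longrightarrow> sum w K = a"
  shows "a = 0"
proof -
  have "(\<Sum>i=0..<5. \<Sum>j=0..<6. w (i, j)) = (\<Sum>i=0..<(5::nat). a)"
  proof (rule sum.cong)
    fix i :: nat assume "i \<in> {0..<5}"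
    then have "sum w ({i} \<times> {0..<6}) = a" using assms by (auto simp: K56_line_def)
    then show "(\<Sum>j=0..<6. w (i, j)) = a"
      using sum.cartesian_product[of "\<lambda>i j. w (i, j)" "{0..<6}" "{i}"] by simp
  qed simp
  moreover have "(\<Sum>j=0..<6. \<Sum>i=0..<5. w (i, j)) = (\<Sum>j=0..<(6::nat). a)"
  proof (rule sum.cong)
    fix j :: nat assume "j \<in> {0..<6}"
    then have "sum w ({0..<5} \<times> {j}) = a" using assms by (auto simp: K56_line_def)
    then show "(\<Sum>i=0..<5. w (i, j)) = a"
      using sum.cartesian_product[of "\<lambda>i j. w (i, j)" "{j}" "{0..<5}"] by simp
  qed simp
  moreover have "(\<Sum>i=0..<5. \<Sum>j=0..<6. w (i, j)) = (\<Sum>j=0..<6. \<Sum>i=0..<5. w (i, j))"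
    by (rule sum.swap)
  ultimately show ?thesis by simp
qed

lemma maximal_stable_set_compl_L_Orig:
  assumes sub: "K \<subseteq> K56_edges"
    and clique: "\<And>u v. u \<in> K \<Longrightarrow> v \<in> K \<Longrightarrow> u \<noteq> v \<Longrightarrow> lineK56_adj u v"
    and maximal: "\<And>w. w \<in> K56_edges - K \<Longrightarrow> \<exists>u\<in>K. \<not> lineK56_adj u w"
    and large: "2 < card K"
  shows "maximal_stable_set L_vertices (graph_compl L_adj) (Orig ` K)"
  unfolding maximal_stable_set_def stable_set_def
proof (intro conjI allI impI)
  show "Orig ` K \<subseteq> L_vertices" using sub by (auto simp: L_vertices_def)
  show "\<forall>u\<in>Orig ` K. \<forall>v\<in>Orig ` K. \<not> graph_compl L_adj u v"
    using clique by (auto simp: graph_compl_def)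
  fix T assume T: "(T \<subseteq> L_vertices \<and> (\<forall>u\<in>T. \<forall>v\<in>T. \<not> graph_compl L_adj u v)) \<and> Orig ` K \<subseteq> T"
  have adj: "s = t \<or> L_adj s t" if "s \<in> Orig ` K" "t \<in> T" for s t
    using T that unfolding graph_compl_def by blast
  have "t \<in> Orig ` K" if "t \<in> T" for t
  proof -
    have "t \<in> L_vertices" using T that by blast
    then consider (orig) w where "t = Orig w" "w \<in> K56_edges"
      | (new) x y where "t = New {x, y}"
      unfolding L_vertices_def by auto
    then show ?thesis
    proof cases
      case orig
      then show ?thesis using adj[OF _ that] maximal[of w] by force
    next
      case new
      have "K \<subseteq> {x, y}"
      proof
        fix u assume "u \<in> K"
        then show "u \<in> {x, y}" using adj[of "Orig u" t] new that by simp
      qed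
      then have "card K \<le> card {x, y}" by (intro card_mono) simp_all
      also have "\<dots> \<le> 2" by (simp add: card_insert_if)
      finally show ?thesis using large by simp
    qed
  qed
  then show "T = Orig ` K" using T by blast
qed

lemma maximal_stable_set_compl_L_line:
  assumes "K56_line K"
  shows "maximal_stable_set L_vertices (graph_compl L_adj) (Orig ` K)"
proof (rule maximal_stable_set_compl_L_Orig)
  show "K \<subseteq> K56_edges" "2 < card K"
    using assms by (auto simp: K56_line_def K56_edges_def)
  show "lineK56_adj u v" if "u \<in> K" "v \<in> K" "u \<noteq> v" for u v
    using assms that by (auto simp: K56_line_def K56_edges_def lineK56_adj_def)
  show "\<exists>u\<in>K. \<not> lineK56_adj u w" if w: "w \<in> K56_edges - K" for w
    using assms unfolding K56_line_def
  proof (elim disjE exE conjE)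
    fix i assume row: "i < 5" "K = {i} \<times> {0..<6}"
    have "\<not> lineK56_adj (i, if snd w = 0 then 1 else 0) w"
      using row w by (auto simp: lineK56_adj_def K56_edges_def)
    then show ?thesis using row by force
  next
    fix j assume col: "j < 6" "K = {0..<5} \<times> {j}"
    have "\<not> lineK56_adj (if fst w = 0 then 1 else 0, j) w"
      using col w by (auto simp: lineK56_adj_def K56_edges_def)
    then show ?thesis using col by force
  qed
qed

lemma not_equistable_compl_LLbar: "\<not> equistable LLbar_vertices (graph_compl LLbar_adj)"
proof
  assume "equistable LLbar_vertices (graph_compl LLbar_adj)"
  then obtain \<phi> :: "Lvert + Lvert \<Rightarrow> real" where \<phi>: "\<And>S. S \<subseteq> LLbar_vertices \<Longrightarrow>
      maximal_stable_set LLbar_vertices (graph_compl LLbar_adj) S \<longleftrightarrow> sum \<phi> S = 1"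
    unfolding equistable_def by blast
  have "sum (\<phi> \<circ> Inl \<circ> Orig) K = 1" if "K56_line K" for K
  proof -
    have "Orig ` K \<noteq> {}"
      using that by (auto simp: K56_line_def Times_empty eq_commute[of "{}"])
    then have max: "maximal_stable_set LLbar_vertices (graph_compl LLbar_adj) (Inl ` Orig ` K)"
      using maximal_stable_set_compl_du_Inl maximal_stable_set_compl_L_line[OF that]
      unfolding LLbar_vertices_def du_vertices_def LLbar_adj_def by blast
    then have "sum \<phi> (Inl ` Orig ` K) = 1" using \<phi>[OF maximal_stable_set_subset[OF max]] by simp
    then show ?thesis by (simp add: image_image sum.reindex inj_on_def)
  qed
  then have "(1::real) = 0" by (rule K56_line_weight_eq_0)
  then show False by simp
qed

lemma not_equistable_LLbar: "\<not> equistable LLbar_vertices LLbar_adj"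
proof
  assume "equistable LLbar_vertices LLbar_adj"
  then obtain \<phi> :: "Lvert + Lvert \<Rightarrow> real" where \<phi>: "\<And>S. S \<subseteq> LLbar_vertices \<Longrightarrow>
      maximal_stable_set LLbar_vertices LLbar_adj S \<longleftrightarrow> sum \<phi> S = 1"
    unfolding equistable_def by blast
  obtain S where S: "maximal_stable_set L_vertices L_adj S"
    using ex_maximal_stable_set finite_L_vertices by blast
  have "finite S" using finite_subset[OF maximal_stable_set_subset[OF S] finite_L_vertices] .
  have line_max: "maximal_stable_set LLbar_vertices LLbar_adj (Inl ` S \<union> Inr ` Orig ` K)"
    if "K56_line K" for K
    using maximal_stable_set_du[OF S maximal_stable_set_compl_L_line[OF that]]
    unfolding LLbar_vertices_def du_vertices_def LLbar_adj_def .
  have "sum (\<phi> \<circ> Inr \<circ> Orig) K = 1 - sum \<phi> (Inl ` S)" if "K56_line K" for K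
  proof -
    have "finite K" using that by (auto simp: K56_line_def)
    have "sum \<phi> (Inl ` S \<union> Inr ` Orig ` K) = 1"
      using \<phi>[OF maximal_stable_set_subset[OF line_max[OF that]]] line_max[OF that] by simp
    moreover have "sum \<phi> (Inl ` S \<union> Inr ` Orig ` K) = sum \<phi> (Inl ` S) + sum (\<phi> \<circ> Inr \<circ> Orig) K"
      using \<open>finite S\<close> \<open>finite K\<close>
      by (subst sum.union_disjoint) (auto simp: image_image sum.reindex inj_on_def)
    ultimately show ?thesis by simp
  qed
  then have "1 - sum \<phi> (Inl ` S) = 0" by (rule K56_line_weight_eq_0)
  moreover have "Inl ` S \<subseteq> LLbar_vertices"
    using maximal_stable_set_subset[OF S] by (auto simp: LLbar_vertices_def du_vertices_def)
  ultimately have max_S: "maximal_stable_set LLbar_vertices LLbar_adj (Inl ` S)" using \<phi> by simp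
  have row: "K56_line ({0} \<times> {0..<6})" unfolding K56_line_def by (intro disjI1 exI[of _ 0]) simp
  have "stable_set LLbar_vertices LLbar_adj (Inl ` S \<union> Inr ` Orig ` ({0} \<times> {0..<6}))"
    using line_max[OF row] by (simp add: maximal_stable_set_def)
  then have "Inl ` S \<union> Inr ` Orig ` ({0} \<times> {0..<6}) = Inl ` S"
    using max_S unfolding maximal_stable_set_def by (meson Un_upper1)
  moreover have "Inr (Orig (0, 0)) \<in> Inl ` S \<union> Inr ` Orig ` ({0} \<times> {0..<6})" by simp
  ultimately show False by blast
qed

theorem proposition40:
  shows "\<not> union_equistable LLbar_vertices LLbar_adj"
  using not_equistable_LLbar not_equistable_compl_LLbar unfolding union_equistable_def by blast

end
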